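(* Let $\mathcal{L}(\vec\theta)=\operatorname{Tr}[U(\vec\theta)\rho U^\dagger(\vec\theta)O]$ be a loss function on $n$ qubits depending on $m$ independent real parameters. Let $\vec\phi\in\mathbb{R}^m$ and $r_{\mathrm{full}}>0$, and assume $\mathbb{E}_{\vec\theta\sim\mathcal{U}(\vec\phi,r_{\mathrm{full}})}[\mathcal{L}(\vec\theta)]=0$, that $m=cn$ for a constant $c>1$, and that $$\operatorname{Var}_{\vec\theta\sim\mathcal{U}(\vec\phi,r_{\mathrm{full}})}[\mathcal{L}(\vec\theta)]\in\mathcal{O}(b^{-n})$$ for some $b>1$. Then for every $r$ with $r_{\mathrm{full}}/b^{1/c}<r\le r_{\mathrm{full}}$, $$\operatorname{Var}_{\vec\theta\sim\mathcal{U}(\vec\phi,r)}[\mathcal{L}(\vec\theta)]\in\mathcal{O}(\beta^{-n})$$ for some $\beta>1$.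
   Context: $\rho$ is an $n$-qubit density operator, $O$ a Hermitian observable, $U(\vec\theta)$ a parametrized quantum circuit. $\mathcal{U}(\vec\phi,r)$ denotes the uniform distribution over the hypercube $\{\vec\theta:\theta_i\in[\phi_i-r,\phi_i+r],\ i=1,\dots,m\}$. Asymptotic statements refer to a family of instances indexed by $n$. *)

theory Defs
  imports "HOL-Analysis.Analysis" "HOL-Library.Landau_Symbols" "Jordan_Normal_Form.Matrix"
begin

definition mat_trace :: "complex mat \<Rightarrow> complex" where
  "mat_trace A = (\<Sum>i<dim_row A. A $$ (i, i))"

definition dagger :: "complex mat \<Rightarrow> complex mat" where
  "dagger A = mat (dim_col A) (dim_row A) (\<lambda>(i, j). cnj (A $$ (j, i)))"

definition hermitian_mat :: "nat \<Rightarrow> complex mat \<Rightarrow> bool" where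
  "hermitian_mat d A \<longleftrightarrow> A \<in> carrier_mat d d \<and> dagger A = A"

definition unitary_mat :: "nat \<Rightarrow> complex mat \<Rightarrow> bool" where
  "unitary_mat d U \<longleftrightarrow> U \<in> carrier_mat d d \<and> dagger U * U = 1\<^sub>m d \<and> U * dagger U = 1\<^sub>m d"

definition psd_mat :: "nat \<Rightarrow> complex mat \<Rightarrow> bool" where
  "psd_mat d A \<longleftrightarrow> hermitian_mat d A \<and>
     (\<forall>v \<in> carrier_vec d. Im ((A *\<^sub>v v) \<bullet>c v) = 0 \<and> 0 \<le> Re ((A *\<^sub>v v) \<bullet>c v))"

definition density_op :: "nat \<Rightarrow> complex mat \<Rightarrow> bool" where
  "density_op d \<rho> \<longleftrightarrow> psd_mat d \<rho> \<and> mat_trace \<rho> = 1"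

text \<open>L(theta) = Tr[U(theta) rho U(theta)^dagger O]; it is real for Hermitian O and
  density rho, we take the real part to have a real-valued function.\<close>
definition loss :: "((nat \<Rightarrow> real) \<Rightarrow> complex mat) \<Rightarrow> complex mat \<Rightarrow> complex mat
                     \<Rightarrow> (nat \<Rightarrow> real) \<Rightarrow> real" where
  "loss U \<rho> Obs \<theta> = Re (mat_trace (U \<theta> * \<rho> * dagger (U \<theta>) * Obs))"

text \<open>Parameter vectors in R^m are the extensional functions on {..<m}.
  U(phi, r) is the uniform distribution on the hypercube
  {theta. theta_i in [phi_i - r, phi_i + r], i < m}.\<close>
definition param_space :: "nat \<Rightarrow> (nat \<Rightarrow> real) measure" where
  "param_space m = PiM {..<m} (\<lambda>_. lborel)"

definition hypercube :: "nat \<Rightarrow> (nat \<Rightarrow> real) \<Rightarrow> real \<Rightarrow> (nat \<Rightarrow> real) set" where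
  "hypercube m \<phi> r = PiE {..<m} (\<lambda>i. {\<phi> i - r .. \<phi> i + r})"

definition unif_cube :: "nat \<Rightarrow> (nat \<Rightarrow> real) \<Rightarrow> real \<Rightarrow> (nat \<Rightarrow> real) measure" where
  "unif_cube m \<phi> r = uniform_measure (param_space m) (hypercube m \<phi> r)"

definition expect :: "'a measure \<Rightarrow> ('a \<Rightarrow> real) \<Rightarrow> real" where
  "expect M f = (\<integral>x. f x \<partial>M)"

definition var :: "'a measure \<Rightarrow> ('a \<Rightarrow> real) \<Rightarrow> real" where
  "var M f = (\<integral>x. (f x - expect M f)\<^sup>2 \<partial>M)"

end

theory Submission
  imports Defs "HOL-Probability.Probability_Measure"
begin

text \<open>The uniform density on a hypercube of radius \<open>r\<close> is at most \<open>(r_full/r)^m\<close> times the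
  uniform density on the concentric cube of radius \<open>r_full\<close>. Hence the second moment of the
  bounded loss on the small cube is at most \<open>(r_full/r)^m\<close> times that on the full cube, and the
  latter is the full variance since the mean vanishes. With \<open>m = c n\<close> the variance on the small
  cube is thus \<open>O((r_full/r)^(c n) b^(-n)) = O(\<beta>^(-n))\<close> with \<open>\<beta> = b (r/r_full)^c\<close>, and
  \<open>\<beta> > 1\<close> exactly when \<open>r > r_full b^(-1/c)\<close>.\<close>

lemma uniform_measure_eq_density_real:
  assumes "S \<in> sets M" "emeasure M S \<noteq> 0" "emeasure M S \<noteq> \<infinity>"
  shows "uniform_measure M S = density M (\<lambda>x. ennreal (indicator S x / measure M S))"
proof -
  have pos: "measure M S > 0"
    using assms by (simp add: emeasure_eq_ennreal_measure measure_nonneg order_le_neq_trans)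
  have "indicator S x / emeasure M S = ennreal (indicator S x / measure M S)" for x
    using assms pos divide_ennreal[of 1 "measure M S"]
    by (simp add: emeasure_eq_ennreal_measure indicator_def)
  then show ?thesis
    unfolding uniform_measure_def by simp
qed

lemma
  fixes g :: "'a \<Rightarrow> real"
  assumes "S \<in> sets M" "emeasure M S \<noteq> 0" "emeasure M S \<noteq> \<infinity>" "g \<in> borel_measurable M"
  shows integral_uniform_measure:
      "(\<integral>x. g x \<partial>uniform_measure M S) = (\<integral>x. indicator S x / measure M S * g x \<partial>M)"
    and integrable_uniform_measure_iff:
      "integrable (uniform_measure M S) g \<longleftrightarrow> integrable M (\<lambda>x. indicator S x / measure M S * g x)"
  using assms by (simp_all add: uniform_measure_eq_density_real integral_density integrable_density)

lemma integral_uniform_measure_le_subset: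
  fixes g :: "'a \<Rightarrow> real"
  assumes ST: "S \<subseteq> T" "S \<in> sets M" "T \<in> sets M"
    and fin: "emeasure M S \<noteq> 0" "emeasure M T \<noteq> \<infinity>"
    and g: "g \<in> borel_measurable M" "\<And>x. 0 \<le> g x"
    and int: "integrable (uniform_measure M T) g"
  shows "(\<integral>x. g x \<partial>uniform_measure M S) \<le>
           measure M T / measure M S * (\<integral>x. g x \<partial>uniform_measure M T)"
proof -
  have finS: "emeasure M S \<noteq> \<infinity>"
    using ST fin by (metis emeasure_mono infinity_ennreal_def neq_top_trans)
  have finT: "emeasure M T \<noteq> 0"
    using ST fin by (metis emeasure_mono le_zero_eq)
  have pos: "measure M S > 0"
    using fin finS by (simp add: emeasure_eq_ennreal_measure measure_nonneg order_le_neq_trans)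
  have "measure M S \<le> measure M T"
    using ST fin(2) by (intro measure_mono_fmeasurable) (auto simp: fmeasurable_def less_top)
  with pos have posT: "measure M T > 0"
    by linarith
  have density_le: "indicator S x / measure M S * g x
          \<le> measure M T / measure M S * (indicator T x / measure M T * g x)" for x
    using ST pos posT g(2)[of x] by (auto simp: indicator_def)
  have "integrable M (\<lambda>x. indicator T x / measure M T * g x)"
    using int g(1) by (simp add: integrable_uniform_measure_iff[OF ST(3) finT fin(2)])
  then have "(\<integral>x. indicator S x / measure M S * g x \<partial>M)
               \<le> (\<integral>x. measure M T / measure M S * (indicator T x / measure M T * g x) \<partial>M)"
    using pos posT g(2) by (intro integral_mono' integrable_mult_right density_le) auto
  also have "\<dots> = measure M T / measure M S * (\<integral>x. indicator T x / measure M T * g x \<partial>M)"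
    by (rule integral_mult_right_zero)
  finally show ?thesis
    by (simp only: integral_uniform_measure[OF ST(2) fin(1) finS g(1)]
        integral_uniform_measure[OF ST(3) finT fin(2) g(1)])
qed

lemma var_nonneg: "0 \<le> var M f"
  unfolding var_def by (rule integral_nonneg_AE) simp

lemma var_le_second_moment:
  fixes f :: "'a \<Rightarrow> real"
  assumes "prob_space M" "f \<in> borel_measurable M" "integrable M (\<lambda>x. (f x)\<^sup>2)"
  shows "var M f \<le> (\<integral>x. (f x)\<^sup>2 \<partial>M)"
proof -
  interpret prob_space M by fact
  have "integrable M f"
    by (rule square_integrable_imp_integrable[OF assms(2,3)])
  then have "var M f = (\<integral>x. (f x)\<^sup>2 \<partial>M) - (\<integral>x. f x \<partial>M)\<^sup>2"
    unfolding var_def expect_def using assms(3) by (rule variance_eq)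
  then show ?thesis
    by simp
qed

lemma hypercube_in_sets: "hypercube m \<phi> r \<in> sets (param_space m)"
  unfolding hypercube_def param_space_def by (rule sets_PiM_I_finite) auto

lemma hypercube_mono: "r \<le> r' \<Longrightarrow> hypercube m \<phi> r \<subseteq> hypercube m \<phi> r'"
  unfolding hypercube_def by (intro PiE_mono) auto

lemma emeasure_hypercube:
  assumes "r > 0"
  shows "emeasure (param_space m) (hypercube m \<phi> r) = ennreal ((2 * r) ^ m)"
proof -
  interpret product_sigma_finite "\<lambda>_::nat. lborel" by unfold_locales
  have "emeasure (param_space m) (hypercube m \<phi> r) = (\<Prod>i<m. emeasure lborel {\<phi> i - r .. \<phi> i + r})"
    unfolding hypercube_def param_space_def by (rule emeasure_PiM) auto
  also have "\<dots> = ennreal ((2 * r) ^ m)"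
    using assms by (simp add: prod_ennreal ennreal_power)
  finally show ?thesis .
qed

lemma measure_hypercube: "r > 0 \<Longrightarrow> measure (param_space m) (hypercube m \<phi> r) = (2 * r) ^ m"
  by (simp add: measure_def emeasure_hypercube)

lemma prob_space_unif_cube: "r > 0 \<Longrightarrow> prob_space (unif_cube m \<phi> r)"
  unfolding unif_cube_def by (rule prob_space_uniform_measure) (auto simp: emeasure_hypercube)

lemma borel_measurable_unif_cube_iff:
  "f \<in> borel_measurable (unif_cube m \<phi> r) \<longleftrightarrow> f \<in> borel_measurable (param_space m)"
  unfolding unif_cube_def by (simp only: measurable_cong_sets[OF sets_uniform_measure refl])

lemma integrable_unif_cube_bounded:
  fixes f :: "(nat \<Rightarrow> real) \<Rightarrow> real"
  assumes "r > 0" "f \<in> borel_measurable (param_space m)" "\<And>x. \<bar>f x\<bar> \<le> K"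
  shows "integrable (unif_cube m \<phi> r) f"
proof -
  interpret prob_space "unif_cube m \<phi> r"
    using assms(1) by (rule prob_space_unif_cube)
  show ?thesis
    using assms by (intro integrable_const_bound[where B = K]) (simp_all add: borel_measurable_unif_cube_iff)
qed

lemma var_unif_cube_le:
  fixes f :: "(nat \<Rightarrow> real) \<Rightarrow> real"
  assumes r: "0 < r" "r \<le> r'"
    and f: "f \<in> borel_measurable (param_space m)" "\<And>x. \<bar>f x\<bar> \<le> K"
    and mean0: "expect (unif_cube m \<phi> r') f = 0"
  shows "var (unif_cube m \<phi> r) f \<le> (r' / r) ^ m * var (unif_cube m \<phi> r') f"
proof -
  have r': "r' > 0"
    using r by simp
  have f2_meas: "(\<lambda>x. (f x)\<^sup>2) \<in> borel_measurable (param_space m)"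
    using f(1) by simp
  have f2_bound: "\<bar>(f x)\<^sup>2\<bar> \<le> K\<^sup>2" for x
    using power_mono[OF f(2) abs_ge_zero, of x 2] by simp
  have "var (unif_cube m \<phi> r) f \<le> (\<integral>x. (f x)\<^sup>2 \<partial>unif_cube m \<phi> r)"
    by (rule var_le_second_moment[OF prob_space_unif_cube[OF r(1)]])
      (simp_all add: borel_measurable_unif_cube_iff f(1) integrable_unif_cube_bounded[OF r(1) f2_meas f2_bound])
  also have "\<dots> \<le> measure (param_space m) (hypercube m \<phi> r') / measure (param_space m) (hypercube m \<phi> r)
                    * (\<integral>x. (f x)\<^sup>2 \<partial>unif_cube m \<phi> r')"
    unfolding unif_cube_def
  proof (rule integral_uniform_measure_le_subset[OF hypercube_mono[OF r(2)] hypercube_in_sets hypercube_in_sets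
        _ _ f2_meas zero_le_power2])
    show "emeasure (param_space m) (hypercube m \<phi> r) \<noteq> 0" "emeasure (param_space m) (hypercube m \<phi> r') \<noteq> \<infinity>"
      using r r' by (simp_all add: emeasure_hypercube)
    show "integrable (uniform_measure (param_space m) (hypercube m \<phi> r')) (\<lambda>x. (f x)\<^sup>2)"
      using integrable_unif_cube_bounded[OF r' f2_meas f2_bound] by (simp add: unif_cube_def)
  qed
  also have "\<dots> = (r' / r) ^ m * (\<integral>x. (f x)\<^sup>2 \<partial>unif_cube m \<phi> r')"
    using r r' by (simp add: measure_hypercube power_divide[symmetric])
  also have "(\<integral>x. (f x)\<^sup>2 \<partial>unif_cube m \<phi> r') = var (unif_cube m \<phi> r') f"
    using mean0 by (simp add: var_def)
  finally show ?thesis .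
qed

lemma dagger_carrier: "U \<in> carrier_mat d d \<Longrightarrow> dagger U \<in> carrier_mat d d"
  unfolding dagger_def by auto

lemma index_dagger: "U \<in> carrier_mat d d \<Longrightarrow> i < d \<Longrightarrow> j < d \<Longrightarrow> dagger U $$ (i, j) = cnj (U $$ (j, i))"
  unfolding dagger_def by auto

lemma index_mult_mat_sum:
  "A \<in> carrier_mat d d \<Longrightarrow> B \<in> carrier_mat d d \<Longrightarrow> i < d \<Longrightarrow> j < d \<Longrightarrow>
    (A * B) $$ (i, j) = (\<Sum>k<d. A $$ (i, k) * B $$ (k, j))"
  by (simp add: scalar_prod_def atLeast0LessThan)

lemma mat_trace_mult4:
  assumes "A \<in> carrier_mat d d" "B \<in> carrier_mat d d" "C \<in> carrier_mat d d" "D \<in> carrier_mat d d"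
  shows "mat_trace (A * B * C * D) =
    (\<Sum>i<d. \<Sum>j<d. \<Sum>l<d. \<Sum>k<d. A $$ (i, k) * B $$ (k, l) * C $$ (l, j) * D $$ (j, i))"
proof -
  have AB: "A * B \<in> carrier_mat d d" and ABC: "A * B * C \<in> carrier_mat d d"
    using assms by auto
  have "mat_trace (A * B * C * D) = (\<Sum>i<d. (A * B * C * D) $$ (i, i))"
    unfolding mat_trace_def using ABC assms by simp
  also have "\<dots> = (\<Sum>i<d. \<Sum>j<d. (A * B * C) $$ (i, j) * D $$ (j, i))"
    by (intro sum.cong refl) (simp only: index_mult_mat_sum[OF ABC assms(4)] lessThan_iff)
  also have "\<dots> = (\<Sum>i<d. \<Sum>j<d. \<Sum>l<d. (A * B) $$ (i, l) * C $$ (l, j) * D $$ (j, i))"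
    by (intro sum.cong refl)
      (simp only: index_mult_mat_sum[OF AB assms(3)] lessThan_iff sum_distrib_right)
  also have "\<dots> = (\<Sum>i<d. \<Sum>j<d. \<Sum>l<d. \<Sum>k<d. A $$ (i, k) * B $$ (k, l) * C $$ (l, j) * D $$ (j, i))"
    by (intro sum.cong refl)
      (simp only: index_mult_mat_sum[OF assms(1,2)] lessThan_iff sum_distrib_right)
  finally show ?thesis .
qed

lemma unitary_mat_norm_entry_le_1:
  assumes "unitary_mat d U" "i < d" "k < d"
  shows "cmod (U $$ (i, k)) \<le> 1"
proof -
  have U: "U \<in> carrier_mat d d" and "dagger U * U = 1\<^sub>m d"
    using assms(1) unfolding unitary_mat_def by auto
  then have "1 = (dagger U * U) $$ (k, k)"
    using assms by simp
  also have "\<dots> = (\<Sum>j<d. cnj (U $$ (j, k)) * U $$ (j, k))"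
    using U assms(3) by (simp add: index_mult_mat_sum[OF dagger_carrier[OF U] U] index_dagger)
  also have "\<dots> = of_real (\<Sum>j<d. (cmod (U $$ (j, k)))\<^sup>2)"
  proof -
    have "cnj z * z = complex_of_real ((cmod z)\<^sup>2)" for z
      by (metis complex_norm_square mult.commute of_real_power)
    then show ?thesis
      by (simp only: of_real_sum)
  qed
  finally have "(\<Sum>j<d. (cmod (U $$ (j, k)))\<^sup>2) = 1"
    by (metis of_real_eq_1_iff)
  moreover have "(cmod (U $$ (i, k)))\<^sup>2 \<le> (\<Sum>j<d. (cmod (U $$ (j, k)))\<^sup>2)"
    using assms(2) by (intro member_le_sum) auto
  ultimately show ?thesis
    by (simp add: power_le_one_iff abs_le_square_iff)
qed

lemma loss_eq_sum:
  assumes "U \<theta> \<in> carrier_mat d d" "\<rho> \<in> carrier_mat d d" "Obs \<in> carrier_mat d d"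
  shows "loss U \<rho> Obs \<theta> = Re (\<Sum>i<d. \<Sum>j<d. \<Sum>l<d. \<Sum>k<d.
           U \<theta> $$ (i, k) * \<rho> $$ (k, l) * cnj (U \<theta> $$ (j, l)) * Obs $$ (j, i))"
  unfolding loss_def mat_trace_mult4[OF assms(1,2) dagger_carrier[OF assms(1)] assms(3)]
  using assms(1) by (intro arg_cong[where f = Re] sum.cong refl) (simp add: index_dagger)

lemma loss_measurable:
  assumes U: "\<And>\<theta>. U \<theta> \<in> carrier_mat d d" and "\<rho> \<in> carrier_mat d d" "Obs \<in> carrier_mat d d"
    and meas: "\<And>i j. i < d \<Longrightarrow> j < d \<Longrightarrow> (\<lambda>\<theta>. U \<theta> $$ (i, j)) \<in> borel_measurable N"
  shows "loss U \<rho> Obs \<in> borel_measurable N"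
proof -
  have meas_cnj: "(\<lambda>\<theta>. cnj (U \<theta> $$ (i, j))) \<in> borel_measurable N" if "i < d" "j < d" for i j
    by (rule measurable_compose[OF meas[OF that] borel_measurable_continuous_onI])
      (intro continuous_intros)
  have "(\<lambda>\<theta>. Re (\<Sum>i<d. \<Sum>j<d. \<Sum>l<d. \<Sum>k<d.
           U \<theta> $$ (i, k) * \<rho> $$ (k, l) * cnj (U \<theta> $$ (j, l)) * Obs $$ (j, i))) \<in> borel_measurable N"
    by (rule measurable_compose[OF _ borel_measurable_Re])
      (intro borel_measurable_sum borel_measurable_times borel_measurable_const meas meas_cnj; simp)
  moreover have "loss U \<rho> Obs = (\<lambda>\<theta>. Re (\<Sum>i<d. \<Sum>j<d. \<Sum>l<d. \<Sum>k<d.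
           U \<theta> $$ (i, k) * \<rho> $$ (k, l) * cnj (U \<theta> $$ (j, l)) * Obs $$ (j, i)))"
    using assms by (intro ext loss_eq_sum)
  ultimately show ?thesis
    by simp
qed

lemma loss_bounded:
  assumes U: "\<And>\<theta>. unitary_mat d (U \<theta>)" and "\<rho> \<in> carrier_mat d d" "Obs \<in> carrier_mat d d"
  shows "\<exists>K. \<forall>\<theta>. \<bar>loss U \<rho> Obs \<theta>\<bar> \<le> K"
proof (intro exI allI)
  fix \<theta>
  have "U \<theta> \<in> carrier_mat d d"
    using U unfolding unitary_mat_def by auto
  then have "\<bar>loss U \<rho> Obs \<theta>\<bar> \<le> cmod (\<Sum>i<d. \<Sum>j<d. \<Sum>l<d. \<Sum>k<d.
      U \<theta> $$ (i, k) * \<rho> $$ (k, l) * cnj (U \<theta> $$ (j, l)) * Obs $$ (j, i))"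
    using assms by (simp only: loss_eq_sum abs_Re_le_cmod)
  also have "\<dots> \<le> (\<Sum>i<d. \<Sum>j<d. \<Sum>l<d. \<Sum>k<d.
      cmod (\<rho> $$ (k, l)) * cmod (Obs $$ (j, i)) * (cmod (U \<theta> $$ (i, k)) * cmod (U \<theta> $$ (j, l))))"
    by (intro order.trans[OF norm_sum] sum_mono) (simp add: norm_mult mult_ac)
  also have "\<dots> \<le> (\<Sum>i<d. \<Sum>j<d. \<Sum>l<d. \<Sum>k<d. cmod (\<rho> $$ (k, l)) * cmod (Obs $$ (j, i)))"
    using unitary_mat_norm_entry_le_1[OF U]
    by (intro sum_mono mult_left_le mult_le_one) simp_all
  finally show "\<bar>loss U \<rho> Obs \<theta>\<bar> \<le> (\<Sum>i<d. \<Sum>j<d. \<Sum>l<d. \<Sum>k<d. cmod (\<rho> $$ (k, l)) * cmod (Obs $$ (j, i)))" .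
qed

lemma var_loss_unif_cube_le:
  assumes U: "\<And>\<theta>. unitary_mat d (U \<theta>)" and carriers: "\<rho> \<in> carrier_mat d d" "Obs \<in> carrier_mat d d"
    and meas: "\<And>i j. i < d \<Longrightarrow> j < d \<Longrightarrow> (\<lambda>\<theta>. U \<theta> $$ (i, j)) \<in> borel_measurable (param_space m)"
    and r: "0 < r" "r \<le> r'"
    and mean0: "expect (unif_cube m \<phi> r') (loss U \<rho> Obs) = 0"
  shows "var (unif_cube m \<phi> r) (loss U \<rho> Obs) \<le> (r' / r) ^ m * var (unif_cube m \<phi> r') (loss U \<rho> Obs)"
proof -
  have "\<And>\<theta>. U \<theta> \<in> carrier_mat d d"
    using U by (simp add: unitary_mat_def)
  moreover obtain K where "\<And>\<theta>. \<bar>loss U \<rho> Obs \<theta>\<bar> \<le> K"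
    using loss_bounded[of d U, OF U carriers] by blast
  ultimately show ?thesis
    using carriers meas r mean0 by (intro var_unif_cube_le loss_measurable)
qed

lemma bigo_powr_neg_rescale:
  fixes f g :: "nat \<Rightarrow> real" and a b :: real
  assumes f: "f \<in> O(\<lambda>n. b powr - real n)"
    and g: "\<And>n. 0 \<le> g n" "\<And>n. g n \<le> a powr real n * f n"
    and "a > 0" "b > 0"
  shows "g \<in> O(\<lambda>n. (b / a) powr - real n)"
proof -
  have "g \<in> O(\<lambda>n. a powr real n * f n)"
    using g by (intro landau_o.big_mono always_eventually allI) (auto intro: order.trans[OF _ abs_ge_self])
  also have "(\<lambda>n. a powr real n * f n) \<in> O(\<lambda>n. a powr real n * b powr - real n)"
    using f by (rule landau_o.big.mult_left)
  also have "(\<lambda>n. a powr real n * b powr - real n) = (\<lambda>n. (b / a) powr - real n)"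
    using assms(4,5) by (simp add: powr_divide powr_minus field_simps)
  finally show ?thesis .
qed

lemma powr_radius_ratio_less:
  fixes b c r r' :: real
  assumes "b > 0" "c > 0" "r' > 0" "r' / b powr (1 / c) < r"
  shows "r > 0" and "(r' / r) powr c < b"
proof -
  have "r' < r * b powr (1 / c)"
    using assms(1,4) by (simp add: divide_less_eq)
  moreover show "r > 0"
    using assms(1,3,4) by (smt (verit) divide_pos_pos powr_gt_zero)
  ultimately have "r' / r < b powr (1 / c)"
    by (simp add: divide_less_eq mult.commute)
  then have "(r' / r) powr c < (b powr (1 / c)) powr c"
    using assms \<open>r > 0\<close> by (intro powr_less_mono2) auto
  also have "\<dots> = b"
    using assms(1,2) by (simp add: powr_powr)
  finally show "(r' / r) powr c < b" .
qed

theorem proposition1: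
  fixes \<rho> Obs :: "nat \<Rightarrow> complex mat"
    and U :: "nat \<Rightarrow> (nat \<Rightarrow> real) \<Rightarrow> complex mat"
    and m :: "nat \<Rightarrow> nat"
    and \<phi> :: "nat \<Rightarrow> nat \<Rightarrow> real"
    and c b r_full r :: real
  assumes rho: "\<And>n. density_op (2 ^ n) (\<rho> n)"
    and obs: "\<And>n. hermitian_mat (2 ^ n) (Obs n)"
    and unit: "\<And>n \<theta>. unitary_mat (2 ^ n) (U n \<theta>)"
    and meas: "\<And>n i j. i < 2 ^ n \<Longrightarrow> j < 2 ^ n \<Longrightarrow>
                 (\<lambda>\<theta>. U n \<theta> $$ (i, j)) \<in> borel_measurable (param_space (m n))"
    and c: "c > 1" and m: "\<And>n. real (m n) = c * real n"
    and r_full: "r_full > 0"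
    and mean0: "\<And>n. expect (unif_cube (m n) (\<phi> n) r_full) (loss (U n) (\<rho> n) (Obs n)) = 0"
    and b: "b > 1"
    and var_full: "(\<lambda>n. var (unif_cube (m n) (\<phi> n) r_full) (loss (U n) (\<rho> n) (Obs n)))
                     \<in> O(\<lambda>n. b powr - real n)"
    and r: "r_full / b powr (1 / c) < r" "r \<le> r_full"
  shows "\<exists>\<beta>>1. (\<lambda>n. var (unif_cube (m n) (\<phi> n) r) (loss (U n) (\<rho> n) (Obs n)))
                     \<in> O(\<lambda>n. \<beta> powr - real n)"
proof -
  have r_pos: "r > 0" and ratio: "(r_full / r) powr c < b"
    using powr_radius_ratio_less[OF _ _ r_full r(1)] b c by auto
  define a where "a = (r_full / r) powr c"
  have a: "a > 0" "b / a > 1"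
    using ratio r_pos r_full by (simp_all add: a_def)
  have var_le: "var (unif_cube (m n) (\<phi> n) r) (loss (U n) (\<rho> n) (Obs n))
      \<le> a powr real n * var (unif_cube (m n) (\<phi> n) r_full) (loss (U n) (\<rho> n) (Obs n))" for n
  proof -
    have "\<rho> n \<in> carrier_mat (2 ^ n) (2 ^ n)" "Obs n \<in> carrier_mat (2 ^ n) (2 ^ n)"
      using rho[of n] obs[of n] by (simp_all add: density_op_def psd_mat_def hermitian_mat_def)
    then have "var (unif_cube (m n) (\<phi> n) r) (loss (U n) (\<rho> n) (Obs n))
        \<le> (r_full / r) ^ m n * var (unif_cube (m n) (\<phi> n) r_full) (loss (U n) (\<rho> n) (Obs n))"
      by (intro var_loss_unif_cube_le[OF unit] meas r_pos r(2) mean0)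
    also have "(r_full / r) ^ m n = a powr real n"
      using r_pos r_full by (simp add: a_def powr_powr m powr_realpow[symmetric])
    finally show ?thesis .
  qed
  have "(\<lambda>n. var (unif_cube (m n) (\<phi> n) r) (loss (U n) (\<rho> n) (Obs n))) \<in> O(\<lambda>n. (b / a) powr - real n)"
    using b a(1) by (intro bigo_powr_neg_rescale[OF var_full var_nonneg var_le]) auto
  with a(2) show ?thesis
    by blast
qed

end
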